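(* Consider the version of the jelly–labour model with money described in the context, in which the total amount of money $M=m^{(H)}_t+m^{(F)}_t$ is constant over time. Then the viability closure is constant over time, and for every $t$ the viable region at time $t$ is a subset of the viability closure.
   Context: Model (version with money as a pure store of value). There are an aggregate household and an aggregate firm, and two goods: labour (the numéraire, wage $w=1$; one unit of money always has the value of one unit of labour) and a consumption good called jelly. Parameters: $\alpha,\beta>0$, $0<\gamma<1$, labour force $L_f>0$. The firm has production function $J=L^\gamma$ and expected demand function $\phi_t(J)=z_t/J^{\zeta_t}$ (parameters updated every period). At time $t$ the household holds money $m^{(H)}_t\ge0$ and the firm holds money $m^{(F)}_t\ge0$. One period $t\to t+1$ proceeds as follows. (1) The firm chooses $L^{(D)}_{t+1}=\arg\min_L|L^\gamma\phi_t(L^\gamma)-L|$ subject to $0\le L\le L_f$ and the budget limitation $L\le m^{(F)}_t$. It sets the price $p_{t+1}=\phi_t((L^{(D)}_{t+1})^\gamma)$. (2) The household supplies $L^{(S)}_{t+1}=\frac{\beta}{\alpha+\beta}L_f$. (3) Transacted labour is $L^{(M)}_{t+1}=\min\{L^{(D)}_{t+1},L^{(S)}_{t+1}\}$. (4) The jelly supply is $J^{(S)}_{t+1}=(L^{(M)}_{t+1})^\gamma$. (5) The household demands $J^{(D)}_{t+1}=\min\{\frac{\beta}{\alpha+\beta}\frac{L_f}{p_{t+1}},\frac{m^{(H)}_t}{p_{t+1}}\}$, i.e. it faces the budget limitation given by its money holdings. (6) Transacted jelly is $J^{(M)}_{t+1}=\min\{J^{(D)}_{t+1},J^{(S)}_{t+1}\}$.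 (7) The money holdings update as $m^{(F)}_{t+1}=m^{(F)}_t+p_{t+1}J^{(M)}_{t+1}-L^{(M)}_{t+1}$ and $m^{(H)}_{t+1}=m^{(H)}_t-p_{t+1}J^{(M)}_{t+1}+L^{(M)}_{t+1}$. (8) The firm updates its expectations. The agents' budgets are their money holdings: $B^{(F)}_t=m^{(F)}_t$ and $B^{(H)}_t=m^{(H)}_t$. The economic state at time $t$ is $e_t=(L^{(D)}_t,L^{(S)}_t,J^{(D)}_t,J^{(S)}_t,p_t)$. The viable region at time $t$ is the set of economic states that could be reached at time $t+1$ without violating the agents' budget limitations. The viability closure is the set of economic states that would be viable if both agents had the full amount $M$ at their disposal when making their decisions about supply, demand and prices. *)

theory Defs
  imports Complex_Main
begin

type_synonym econ_state = "real \<times> real \<times> real \<times> real \<times> real"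
  (* (L^D, L^S, J^D, J^S, p) *)

definition labour_supply :: "real \<Rightarrow> real \<Rightarrow> real \<Rightarrow> real" where
  "labour_supply \<alpha> \<beta> Lf = \<beta> / (\<alpha> + \<beta>) * Lf"

definition exp_demand :: "real \<Rightarrow> real \<Rightarrow> real \<Rightarrow> real" where
  "exp_demand z \<zeta> J = z / J powr \<zeta>"

text \<open>Economic states that can arise from the agents' decision rules (firm
  labour demand in [0, Lf], household supply and jelly supply as in the model,
  positive price, household demand at most the desired amount) and that
  respect the budget limitations: firm budget bF (labour costs, wage 1) and
  household budget bH (jelly expenditure).\<close>
definition viable_set ::
  "real \<Rightarrow> real \<Rightarrow> real \<Rightarrow> real \<Rightarrow> real \<Rightarrow> real \<Rightarrow> econ_state set" where
  "viable_set \<alpha> \<beta> \<gamma> Lf bF bH =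
     {(LD, LS, JD, JS, p).
        0 \<le> LD \<and> LD \<le> Lf \<and> LD \<le> bF \<and>
        LS = labour_supply \<alpha> \<beta> Lf \<and>
        JS = (min LD LS) powr \<gamma> \<and>
        0 < p \<and> 0 \<le> JD \<and> JD \<le> labour_supply \<alpha> \<beta> Lf / p \<and>
        p * JD \<le> bH}"

definition viable_region ::
  "real \<Rightarrow> real \<Rightarrow> real \<Rightarrow> real \<Rightarrow> (nat \<Rightarrow> real) \<Rightarrow> (nat \<Rightarrow> real) \<Rightarrow> nat \<Rightarrow> econ_state set" where
  "viable_region \<alpha> \<beta> \<gamma> Lf mF mH t = viable_set \<alpha> \<beta> \<gamma> Lf (mF t) (mH t)"

definition viability_closure ::
  "real \<Rightarrow> real \<Rightarrow> real \<Rightarrow> real \<Rightarrow> (nat \<Rightarrow> real) \<Rightarrow> (nat \<Rightarrow> real) \<Rightarrow> nat \<Rightarrow> econ_state set" where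
  "viability_closure \<alpha> \<beta> \<gamma> Lf mF mH t =
     viable_set \<alpha> \<beta> \<gamma> Lf (mF t + mH t) (mF t + mH t)"

text \<open>A run of the model: expectation parameters z, zeta (updated arbitrarily),
  money holdings mF, mH, and the period quantities, following steps (1)-(7).\<close>
definition model_run ::
  "real \<Rightarrow> real \<Rightarrow> real \<Rightarrow> real \<Rightarrow> (nat \<Rightarrow> real) \<Rightarrow> (nat \<Rightarrow> real) \<Rightarrow>
   (nat \<Rightarrow> real) \<Rightarrow> (nat \<Rightarrow> real) \<Rightarrow>
   (nat \<Rightarrow> real) \<Rightarrow> (nat \<Rightarrow> real) \<Rightarrow> (nat \<Rightarrow> real) \<Rightarrow> (nat \<Rightarrow> real) \<Rightarrow> (nat \<Rightarrow> real) \<Rightarrow>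
   (nat \<Rightarrow> real) \<Rightarrow> (nat \<Rightarrow> real) \<Rightarrow> bool" where
  "model_run \<alpha> \<beta> \<gamma> Lf z \<zeta> mF mH LD LS JD JS p LM JM \<longleftrightarrow>
    (\<forall>t. 0 \<le> mF t \<and> 0 \<le> mH t \<and>
      \<comment> \<open>(1) firm's labour demand and price\<close>
      0 \<le> LD (Suc t) \<and> LD (Suc t) \<le> Lf \<and> LD (Suc t) \<le> mF t \<and>
      (\<forall>L. 0 \<le> L \<and> L \<le> Lf \<and> L \<le> mF t \<longrightarrow>
         \<bar>LD (Suc t) powr \<gamma> * exp_demand (z t) (\<zeta> t) (LD (Suc t) powr \<gamma>) - LD (Suc t)\<bar>
         \<le> \<bar>L powr \<gamma> * exp_demand (z t) (\<zeta> t) (L powr \<gamma>) - L\<bar>) \<and>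
      p (Suc t) = exp_demand (z t) (\<zeta> t) (LD (Suc t) powr \<gamma>) \<and>
      \<comment> \<open>(2)-(6)\<close>
      LS (Suc t) = labour_supply \<alpha> \<beta> Lf \<and>
      LM (Suc t) = min (LD (Suc t)) (LS (Suc t)) \<and>
      JS (Suc t) = LM (Suc t) powr \<gamma> \<and>
      JD (Suc t) = min (labour_supply \<alpha> \<beta> Lf / p (Suc t)) (mH t / p (Suc t)) \<and>
      JM (Suc t) = min (JD (Suc t)) (JS (Suc t)) \<and>
      \<comment> \<open>(7) money updates\<close>
      mF (Suc t) = mF t + p (Suc t) * JM (Suc t) - LM (Suc t) \<and>
      mH (Suc t) = mH t - p (Suc t) * JM (Suc t) + LM (Suc t))"

end

theory Submission
  imports Defs
begin

lemma viable_set_mono: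
  assumes "bF \<le> bF'" and "bH \<le> bH'"
  shows "viable_set \<alpha> \<beta> \<gamma> Lf bF bH \<subseteq> viable_set \<alpha> \<beta> \<gamma> Lf bF' bH'"
  using assms unfolding viable_set_def by auto

lemma model_run_money_nonneg:
  assumes "model_run \<alpha> \<beta> \<gamma> Lf z \<zeta> mF mH LD LS JD JS p LM JM"
  shows "0 \<le> mF t" and "0 \<le> mH t"
  using assms unfolding model_run_def by auto

lemma model_run_total_money_Suc:
  assumes "model_run \<alpha> \<beta> \<gamma> Lf z \<zeta> mF mH LD LS JD JS p LM JM"
  shows "mF (Suc t) + mH (Suc t) = mF t + mH t"
  using assms unfolding model_run_def by auto

lemma model_run_total_money_const:
  assumes "model_run \<alpha> \<beta> \<gamma> Lf z \<zeta> mF mH LD LS JD JS p LM JM"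
  shows "mF t + mH t = mF 0 + mH 0"
  by (induction t) (simp_all add: model_run_total_money_Suc[OF assms])

theorem proposition4:
  fixes \<alpha> \<beta> \<gamma> Lf :: real
    and z \<zeta> mF mH LD LS JD JS p LM JM :: "nat \<Rightarrow> real"
  assumes "0 < \<alpha>" and "0 < \<beta>" and "0 < \<gamma>" and "\<gamma> < 1" and "0 < Lf"
    and "model_run \<alpha> \<beta> \<gamma> Lf z \<zeta> mF mH LD LS JD JS p LM JM"
  shows "(\<forall>t. viability_closure \<alpha> \<beta> \<gamma> Lf mF mH t = viability_closure \<alpha> \<beta> \<gamma> Lf mF mH 0)
       \<and> (\<forall>t. viable_region \<alpha> \<beta> \<gamma> Lf mF mH t \<subseteq> viability_closure \<alpha> \<beta> \<gamma> Lf mF mH t)"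
proof (intro conjI allI)
  fix t
  show "viability_closure \<alpha> \<beta> \<gamma> Lf mF mH t = viability_closure \<alpha> \<beta> \<gamma> Lf mF mH 0"
    unfolding viability_closure_def
    using model_run_total_money_const[OF assms(6), of t] by simp
  have "mF t \<le> mF t + mH t" and "mH t \<le> mF t + mH t"
    using model_run_money_nonneg[OF assms(6)] by auto
  then show "viable_region \<alpha> \<beta> \<gamma> Lf mF mH t \<subseteq> viability_closure \<alpha> \<beta> \<gamma> Lf mF mH t"
    unfolding viable_region_def viability_closure_def by (rule viable_set_mono)
qed

end
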